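(* Let $A(x)=\sin^2(2\pi x)$, $\hat m(A)=\frac{A(1/3)+A(2/3)}{2}$, $\eta(x)=\frac{x}{4}+\frac12$, $F(x)=A(\frac{x}{2})+A(\frac{x}{4}+\frac12)$, and for $x\in[0,1]$ and $n\in\mathbb{N}$ let $V_2^{n*}(x)=\sum_{i=0}^{n-1}[F(\eta^i(x))-2\hat m(A)]$. Then $V_2^{n*}$ converges uniformly on $[0,1]$ as $n\to\infty$.
   Context: $\eta^i$ denotes the $i$-th iterate of $\eta$, with $\eta^0$ the identity. *)

theory Defs
  imports "HOL-Analysis.Analysis"
begin

definition A :: "real \<Rightarrow> real" where
  "A x = (sin (2 * pi * x))^2"

definition mhat :: real where
  "mhat = (A (1/3) + A (2/3)) / 2"

definition eta :: "real \<Rightarrow> real" where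
  "eta x = x / 4 + 1 / 2"

definition F :: "real \<Rightarrow> real" where
  "F x = A (x / 2) + A (x / 4 + 1 / 2)"

definition V2star :: "nat \<Rightarrow> real \<Rightarrow> real" where
  "V2star n x = (\<Sum>i<n. F ((eta ^^ i) x) - 2 * mhat)"

end

theory Submission
  imports Defs
begin

text \<open>The map \<open>eta\<close> is a contraction with factor \<open>1/4\<close> and fixed point \<open>2/3\<close>, and
  \<open>F (2/3) = 2 * mhat\<close>. Since \<open>F\<close> is Lipschitz, the \<open>i\<close>-th summand of \<open>V2star\<close> is bounded
  by a constant times \<open>4 ^ -i\<close> uniformly on \<open>[0,1]\<close>, so the Weierstrass M-test applies.\<close>

lemma sin_squared_diff: "sin a ^ 2 - sin b ^ 2 = sin (a + b) * sin (a - b)"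
  for a b :: real
  by (simp add: sin_times_sin sin_squared_eq cos_double_sin)

lemma abs_sin_squared_diff_le: "\<bar>sin a ^ 2 - sin b ^ 2\<bar> \<le> \<bar>a - b\<bar>"
  for a b :: real
proof -
  have "\<bar>sin a ^ 2 - sin b ^ 2\<bar> = \<bar>sin (a + b)\<bar> * \<bar>sin (a - b)\<bar>"
    by (simp add: sin_squared_diff abs_mult)
  also have "\<dots> \<le> 1 * \<bar>a - b\<bar>"
    by (intro mult_mono abs_sin_le_one abs_sin_x_le_abs_x) auto
  finally show ?thesis by simp
qed

lemma A_lipschitz: "\<bar>A x - A y\<bar> \<le> 2 * pi * \<bar>x - y\<bar>"
proof -
  have "\<bar>A x - A y\<bar> \<le> \<bar>2 * pi * x - 2 * pi * y\<bar>"
    unfolding A_def by (rule abs_sin_squared_diff_le)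
  also have "\<dots> = 2 * pi * \<bar>x - y\<bar>"
    by (simp add: abs_mult flip: right_diff_distrib)
  finally show ?thesis .
qed

lemma F_lipschitz: "\<bar>F x - F y\<bar> \<le> 3 / 2 * pi * \<bar>x - y\<bar>"
proof -
  have "\<bar>F x - F y\<bar> \<le> \<bar>A (x / 2) - A (y / 2)\<bar> + \<bar>A (x / 4 + 1 / 2) - A (y / 4 + 1 / 2)\<bar>"
    unfolding F_def by linarith
  also have "\<dots> \<le> 2 * pi * \<bar>x / 2 - y / 2\<bar> + 2 * pi * \<bar>(x / 4 + 1 / 2) - (y / 4 + 1 / 2)\<bar>"
    by (intro add_mono A_lipschitz)
  also have "\<dots> = 3 / 2 * pi * \<bar>x - y\<bar>"
    by (simp add: abs_if field_simps)
  finally show ?thesis .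
qed

lemma F_two_thirds: "F (2 / 3) = 2 * mhat"
  unfolding F_def mhat_def by simp

lemma eta_iterate_minus_fixpoint: "(eta ^^ i) x - 2 / 3 = (x - 2 / 3) / 4 ^ i"
  by (induction i) (auto simp: eta_def field_simps)

lemma summand_bound:
  assumes "x \<in> {0..1}"
  shows "\<bar>F ((eta ^^ i) x) - 2 * mhat\<bar> \<le> 3 / 2 * pi * (1 / 4) ^ i"
proof -
  have "\<bar>F ((eta ^^ i) x) - 2 * mhat\<bar> \<le> 3 / 2 * pi * \<bar>(eta ^^ i) x - 2 / 3\<bar>"
    using F_lipschitz[of "(eta ^^ i) x" "2 / 3"] by (simp add: F_two_thirds)
  also have "\<bar>(eta ^^ i) x - 2 / 3\<bar> = \<bar>x - 2 / 3\<bar> / 4 ^ i"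
    by (simp add: eta_iterate_minus_fixpoint)
  also have "\<dots> \<le> 1 / 4 ^ i"
    using assms by (intro divide_right_mono) auto
  finally show ?thesis
    by (simp add: power_one_over)
qed

theorem mainTheorem6:
  shows "uniformly_convergent_on {0..1} V2star"
  unfolding V2star_def[abs_def]
proof (rule Weierstrass_m_test'[where M = "\<lambda>i. 3 / 2 * pi * (1 / 4) ^ i"])
  show "\<And>i x. x \<in> {0..1} \<Longrightarrow> norm (F ((eta ^^ i) x) - 2 * mhat) \<le> 3 / 2 * pi * (1 / 4) ^ i"
    using summand_bound by simp
  show "summable (\<lambda>i. 3 / 2 * pi * (1 / 4 :: real) ^ i)"
    by (intro summable_mult summable_geometric) auto
qed

end
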